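(* Assume condition $(\star)$. Then, with $B^{\mathcal T}$ acting on $C^{\mathcal T}$ by right twisted convolution and $A^{\mathcal T}$ by left twisted convolution, $$\operatorname{End}_{A^{\mathcal T}}(C^{\mathcal T})=B^{\mathcal T},\qquad \operatorname{End}_{B^{\mathcal T}}(C^{\mathcal T})=A^{\mathcal T}.$$ Moreover $B^{\mathcal T}=1_\omega*A^{\mathcal T}*1_\omega$.
   Context: $\Bbbk$ is a field, $G$ a finite group, $\mathcal R$ a unital $\Bbbk$-algebra, free as a $\Bbbk$-module, with $G$ acting by $\Bbbk$-algebra automorphisms. For a finite $G$-set $Z$, $\mathcal R_G(Z)$ is the set of $G$-equivariant maps $Z\to\mathcal R$ ($f(gz)=g(f(z))$), $G$ acting diagonally on products. Let $(\Lambda,\omega)$ be a finite set with a distinguished element $\omega$; for each $\lambda\in\Lambda$ let $Y_\lambda$ be a finite $G$-set, $Y=\bigsqcup_\lambda Y_\lambda$, $X=Y_\omega$, and let $p_\lambda:X\to Y_\lambda$ be $G$-equivariant surjections with $p_\omega=\mathrm{id}$. Fix a twist $e\in\mathcal R_G(Y)$ (every $e(y)$ invertible). $A=\mathcal R_G(Y\times Y)$ with twisted convolution $(f*g)(x,y)=\sum_{z\in Y}f(x,z)e(z)^{-1}g(z,y)$ is a unital associative algebra; $A_{\lambda\mu}=\mathcal R_G(Y_\lambda\times Y_\mu)\subseteq A$ (extension by zero), $B=A_{\omega\omega}$, $C=\bigoplus_\lambda A_{\lambda\omega}$. Define: $S_\lambda\in A_{\omega\lambda}$, $S_\lambda(x,y)=\delta_{p_\lambda(x),y}e(y)$;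 $M_\lambda\in A_{\lambda\omega}$, $M_\lambda(y,x)=\delta_{y,p_\lambda(x)}e(y)$; $K_\lambda\in B$, $K_\lambda(x,x')=\delta_{p_\lambda(x),p_\lambda(x')}e(p_\lambda(x))$; $1_\lambda\in A_{\lambda\lambda}$, $1_\lambda(y,y')=\delta_{y,y'}e(y)$; $m\in\mathcal R_G(Y)$, $m(y)=\sum_{x\in p_\lambda^{-1}(y)}e(x)^{-1}e(y)$ for $y\in Y_\lambda$; for $t\in\mathcal R_G(X)$, $t_\omega\in B$, $t_\omega(x,x')=\delta_{x,x'}e(x)t(x)$. Let $\mathcal T\subseteq\mathcal R$ be a $G$-stable subring. Condition $(\star)$: for every $y\in Y$, $m(y)$ is invertible in $\mathcal R$ and $m(y),m(y)^{-1}\in\mathcal T$. $B^{\mathcal T}\subseteq B$ is the subalgebra generated by all $K_\lambda$ ($\lambda\in\Lambda$) and all $t_\omega$ with $t\in\mathcal R_G(X)$ taking values in $\mathcal T$; $A^{\mathcal T}\subseteq A$ is the subalgebra generated by $B^{\mathcal T}$ and all $S_\lambda,M_\lambda$; $C^{\mathcal T}=A^{\mathcal T}*1_\omega$, an $(A^{\mathcal T},B^{\mathcal T})$-bimodule. *)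

theory Defs
  imports Complex_Main "HOL-Algebra.Group" "HOL-Library.FuncSet"
begin

definition is_unit_r :: "'r::ring_1 \<Rightarrow> bool" where
  "is_unit_r a \<longleftrightarrow> (\<exists>u. u * a = 1 \<and> a * u = 1)"

definition rinv :: "'r::ring_1 \<Rightarrow> 'r" where
  "rinv a = (THE u. u * a = 1 \<and> a * u = 1)"

text \<open>
  G : finite group (HOL-Algebra structure), actR : action of G on the algebra R (type 'r),
  sm : scalar multiplication of the field 'k on R,
  Lam, om : the pointed finite index set, Y : the finite set Y (disjoint union),
  lab y : the index lambda with y in Y_lambda, actY : action of G on Y,
  p lambda : the map p_lambda : X -> Y_lambda, e : the twist.
  Elements of A = R_G(Y x Y) are functions 'y => 'y => 'r vanishing outside Y x Y.
\<close>

context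
  fixes G :: "('g, 'b) monoid_scheme"
    and actR :: "'g \<Rightarrow> 'r::ring_1 \<Rightarrow> 'r"
    and sm :: "'k::field \<Rightarrow> 'r \<Rightarrow> 'r"
    and Lam :: "'l set" and om :: 'l
    and Y :: "'y set" and lab :: "'y \<Rightarrow> 'l"
    and actY :: "'g \<Rightarrow> 'y \<Rightarrow> 'y"
    and p :: "'l \<Rightarrow> 'y \<Rightarrow> 'y"
    and e :: "'y \<Rightarrow> 'r"
begin

definition Yl :: "'l \<Rightarrow> 'y set" where
  "Yl l = {y \<in> Y. lab y = l}"

abbreviation X :: "'y set" where
  "X \<equiv> Yl om"

text \<open>R is a unital k-algebra (over a field it is automatically free as a k-module).\<close>
definition k_algebra :: bool where
  "k_algebra \<longleftrightarrow> vector_space sm \<and>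
     (\<forall>c x y. sm c (x * y) = sm c x * y \<and> sm c (x * y) = x * sm c y)"

definition G_acts_R :: bool where
  "G_acts_R \<longleftrightarrow>
     (\<forall>x. actR \<one>\<^bsub>G\<^esub> x = x) \<and>
     (\<forall>g\<in>carrier G. \<forall>h\<in>carrier G. \<forall>x. actR (g \<otimes>\<^bsub>G\<^esub> h) x = actR g (actR h x)) \<and>
     (\<forall>g\<in>carrier G. bij (actR g) \<and> actR g 1 = 1 \<and>
        (\<forall>x y. actR g (x + y) = actR g x + actR g y \<and> actR g (x * y) = actR g x * actR g y) \<and>
        (\<forall>c x. actR g (sm c x) = sm c (actR g x)))"

definition G_set_Y :: bool where
  "G_set_Y \<longleftrightarrow> finite Y \<and> lab ` Y \<subseteq> Lam \<and>
     (\<forall>y\<in>Y. actY \<one>\<^bsub>G\<^esub> y = y) \<and>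
     (\<forall>g\<in>carrier G. \<forall>y\<in>Y. actY g y \<in> Y \<and> lab (actY g y) = lab y) \<and>
     (\<forall>g\<in>carrier G. \<forall>h\<in>carrier G. \<forall>y\<in>Y. actY (g \<otimes>\<^bsub>G\<^esub> h) y = actY g (actY h y))"

definition proj_maps :: bool where
  "proj_maps \<longleftrightarrow>
     (\<forall>l\<in>Lam. p l ` X = Yl l \<and>
        (\<forall>g\<in>carrier G. \<forall>x\<in>X. p l (actY g x) = actY g (p l x))) \<and>
     (\<forall>x\<in>X. p om x = x)"

definition equivariant1 :: "'y set \<Rightarrow> ('y \<Rightarrow> 'r) \<Rightarrow> bool" where
  "equivariant1 Z f \<longleftrightarrow> (\<forall>g\<in>carrier G. \<forall>z\<in>Z. f (actY g z) = actR g (f z))"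

definition twist :: bool where
  "twist \<longleftrightarrow> equivariant1 Y e \<and> (\<forall>y\<in>Y. is_unit_r (e y))"

definition standing_assumptions :: bool where
  "standing_assumptions \<longleftrightarrow> group G \<and> finite (carrier G) \<and> k_algebra \<and> G_acts_R \<and>
     finite Lam \<and> om \<in> Lam \<and> G_set_Y \<and> proj_maps \<and> twist"

definition Aalg :: "('y \<Rightarrow> 'y \<Rightarrow> 'r) set" where
  "Aalg = {f. (\<forall>x y. (x \<notin> Y \<or> y \<notin> Y) \<longrightarrow> f x y = 0) \<and>
              (\<forall>g\<in>carrier G. \<forall>x\<in>Y. \<forall>y\<in>Y. f (actY g x) (actY g y) = actR g (f x y))}"

definition conv :: "('y \<Rightarrow> 'y \<Rightarrow> 'r) \<Rightarrow> ('y \<Rightarrow> 'y \<Rightarrow> 'r) \<Rightarrow> ('y \<Rightarrow> 'y \<Rightarrow> 'r)" where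
  "conv f h = (\<lambda>x y. \<Sum>z\<in>Y. f x z * rinv (e z) * h z y)"

definition scal :: "'k \<Rightarrow> ('y \<Rightarrow> 'y \<Rightarrow> 'r) \<Rightarrow> ('y \<Rightarrow> 'y \<Rightarrow> 'r)" where
  "scal c f = (\<lambda>x y. sm c (f x y))"

definition Sg :: "'l \<Rightarrow> 'y \<Rightarrow> 'y \<Rightarrow> 'r" where
  "Sg l = (\<lambda>x y. if x \<in> X \<and> y \<in> Yl l \<and> p l x = y then e y else 0)"

definition Mg :: "'l \<Rightarrow> 'y \<Rightarrow> 'y \<Rightarrow> 'r" where
  "Mg l = (\<lambda>y x. if y \<in> Yl l \<and> x \<in> X \<and> y = p l x then e y else 0)"

definition Kg :: "'l \<Rightarrow> 'y \<Rightarrow> 'y \<Rightarrow> 'r" where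
  "Kg l = (\<lambda>x x'. if x \<in> X \<and> x' \<in> X \<and> p l x = p l x' then e (p l x) else 0)"

definition one_l :: "'l \<Rightarrow> 'y \<Rightarrow> 'y \<Rightarrow> 'r" where
  "one_l l = (\<lambda>y y'. if y \<in> Yl l \<and> y = y' then e y else 0)"

definition diag_om :: "('y \<Rightarrow> 'r) \<Rightarrow> 'y \<Rightarrow> 'y \<Rightarrow> 'r" where
  "diag_om t = (\<lambda>x x'. if x \<in> X \<and> x = x' then e x * t x else 0)"

definition mfun :: "'y \<Rightarrow> 'r" where
  "mfun y = (\<Sum>x\<in>{x \<in> X. p (lab y) x = y}. rinv (e x) * e y)"

inductive_set gen_alg :: "('y \<Rightarrow> 'y \<Rightarrow> 'r) set \<Rightarrow> ('y \<Rightarrow> 'y \<Rightarrow> 'r) set"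
  for S0 :: "('y \<Rightarrow> 'y \<Rightarrow> 'r) set"
where
  gen_base: "a \<in> S0 \<Longrightarrow> a \<in> gen_alg S0"
| gen_zero: "(\<lambda>x y. 0) \<in> gen_alg S0"
| gen_add: "a \<in> gen_alg S0 \<Longrightarrow> b \<in> gen_alg S0 \<Longrightarrow> (\<lambda>x y. a x y + b x y) \<in> gen_alg S0"
| gen_scal: "a \<in> gen_alg S0 \<Longrightarrow> scal c a \<in> gen_alg S0"
| gen_mult: "a \<in> gen_alg S0 \<Longrightarrow> b \<in> gen_alg S0 \<Longrightarrow> conv a b \<in> gen_alg S0"

definition G_stable_subring :: "'r set \<Rightarrow> bool" where
  "G_stable_subring T \<longleftrightarrow> 0 \<in> T \<and> 1 \<in> T \<and>
     (\<forall>a\<in>T. \<forall>b\<in>T. a + b \<in> T \<and> a - b \<in> T \<and> a * b \<in> T) \<and>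
     (\<forall>g\<in>carrier G. \<forall>a\<in>T. actR g a \<in> T)"

definition cond_star :: "'r set \<Rightarrow> bool" where
  "cond_star T \<longleftrightarrow> (\<forall>y\<in>Y. is_unit_r (mfun y) \<and> mfun y \<in> T \<and> rinv (mfun y) \<in> T)"

definition BT :: "'r set \<Rightarrow> ('y \<Rightarrow> 'y \<Rightarrow> 'r) set" where
  "BT T = gen_alg (Kg ` Lam \<union>
             {diag_om t | t. equivariant1 X t \<and> (\<forall>x\<in>X. t x \<in> T)})"

definition AT :: "'r set \<Rightarrow> ('y \<Rightarrow> 'y \<Rightarrow> 'r) set" where
  "AT T = gen_alg (BT T \<union> Sg ` Lam \<union> Mg ` Lam)"

definition CT :: "'r set \<Rightarrow> ('y \<Rightarrow> 'y \<Rightarrow> 'r) set" where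
  "CT T = (\<lambda>a. conv a (one_l om)) ` AT T"

definition End_left :: "('y \<Rightarrow> 'y \<Rightarrow> 'r) set \<Rightarrow> ('y \<Rightarrow> 'y \<Rightarrow> 'r) set
    \<Rightarrow> (('y \<Rightarrow> 'y \<Rightarrow> 'r) \<Rightarrow> ('y \<Rightarrow> 'y \<Rightarrow> 'r)) set" where
  "End_left Al C = {\<phi>. \<phi> \<in> extensional C \<and> \<phi> \<in> C \<rightarrow> C \<and>
     (\<forall>c\<in>C. \<forall>d\<in>C. \<phi> (\<lambda>x y. c x y + d x y) = (\<lambda>x y. \<phi> c x y + \<phi> d x y)) \<and>
     (\<forall>k. \<forall>c\<in>C. \<phi> (scal k c) = scal k (\<phi> c)) \<and>
     (\<forall>a\<in>Al. \<forall>c\<in>C. \<phi> (conv a c) = conv a (\<phi> c))}"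

definition End_right :: "('y \<Rightarrow> 'y \<Rightarrow> 'r) set \<Rightarrow> ('y \<Rightarrow> 'y \<Rightarrow> 'r) set
    \<Rightarrow> (('y \<Rightarrow> 'y \<Rightarrow> 'r) \<Rightarrow> ('y \<Rightarrow> 'y \<Rightarrow> 'r)) set" where
  "End_right Ar C = {\<phi>. \<phi> \<in> extensional C \<and> \<phi> \<in> C \<rightarrow> C \<and>
     (\<forall>c\<in>C. \<forall>d\<in>C. \<phi> (\<lambda>x y. c x y + d x y) = (\<lambda>x y. \<phi> c x y + \<phi> d x y)) \<and>
     (\<forall>k. \<forall>c\<in>C. \<phi> (scal k c) = scal k (\<phi> c)) \<and>
     (\<forall>b\<in>Ar. \<forall>c\<in>C. \<phi> (conv c b) = conv (\<phi> c) b)}"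

end

end

theory Submission
  imports Defs
begin

(* Write 1_l for the idempotent of the block Y_l; everything is read off the decomposition of A into
   the blocks 1_l A 1_m.
   Since S_n M_n = K_n lies in B^T, an induction over the generators of A^T shows that every block
   1_l a 1_m of an element a of A^T has the form M_l b S_m with b in B^T; the block (om, om) gives
   B^T = 1_om A^T 1_om. An A^T-linear endomorphism of C^T is therefore right multiplication by its
   value at 1_om, which lies in B^T.
   Condition (star) makes t_l = diag(m(p_l x)^-1) an element of B^T with M_l t_l S_l = 1_l. Hence
   every c in C^T is the sum of the M_l (t_l S_l c) with t_l S_l c in B^T, and a B^T-linear
   endomorphism phi of C^T is left multiplication by the sum of the phi(M_l) t_l S_l, which lies
   in A^T. *)

lemma rinv_unit:
  assumes "is_unit_r (u::'r::ring_1)"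
  shows "rinv u * u = 1" "u * rinv u = 1"
proof -
  obtain v where v: "v * u = 1" "u * v = 1" using assms unfolding is_unit_r_def by blast
  have "rinv u = v" unfolding rinv_def
  proof (rule the_equality)
    show "v * u = 1 \<and> u * v = 1" using v by simp
    fix w assume w: "w * u = 1 \<and> u * w = 1"
    have "w = (w * u) * v" using v by (simp add: mult.assoc)
    then show "w = v" using w by simp
  qed
  then show "rinv u * u = 1" "u * rinv u = 1" using v by auto
qed

lemma hom_rinv:
  assumes "is_unit_r (u::'r::ring_1)" "f 1 = 1" "\<And>a b. f (a * b) = f a * f b"
  shows "rinv (f u) = f (rinv u)"
proof -
  have inv: "f (rinv u) * f u = 1" "f u * f (rinv u) = 1"
    using rinv_unit[OF assms(1)] assms(2,3) by metis+
  then have "is_unit_r (f u)" unfolding is_unit_r_def by blast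
  then have "rinv (f u) = rinv (f u) * f u * f (rinv u)"
    using inv(2) rinv_unit by (simp add: mult.assoc)
  also have "\<dots> = f (rinv u)" using rinv_unit[OF \<open>is_unit_r (f u)\<close>] by simp
  finally show ?thesis .
qed

definition rows_in :: "'y set \<Rightarrow> ('y \<Rightarrow> 'y \<Rightarrow> 'r::zero) \<Rightarrow> bool" where
  "rows_in R f \<longleftrightarrow> (\<forall>x y. x \<notin> R \<longrightarrow> f x y = 0)"

definition cols_in :: "'y set \<Rightarrow> ('y \<Rightarrow> 'y \<Rightarrow> 'r::zero) \<Rightarrow> bool" where
  "cols_in R f \<longleftrightarrow> (\<forall>x y. y \<notin> R \<longrightarrow> f x y = 0)"

definition msum :: "('i \<Rightarrow> 'y \<Rightarrow> 'y \<Rightarrow> 'r::comm_monoid_add) \<Rightarrow> 'i set \<Rightarrow> 'y \<Rightarrow> 'y \<Rightarrow> 'r" where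
  "msum F A = (\<lambda>x y. \<Sum>i\<in>A. F i x y)"

lemma rows_in_mono: "R \<subseteq> R' \<Longrightarrow> rows_in R f \<Longrightarrow> rows_in R' f"
  unfolding rows_in_def by blast

lemma cols_in_mono: "R \<subseteq> R' \<Longrightarrow> cols_in R f \<Longrightarrow> cols_in R' f"
  unfolding cols_in_def by blast

lemma msum_cong: "(\<And>i. i \<in> A \<Longrightarrow> F i = H i) \<Longrightarrow> msum F A = msum H A"
  unfolding msum_def by (intro ext sum.cong) auto

lemma msum_additive:
  fixes \<phi> :: "('y \<Rightarrow> 'y \<Rightarrow> 'r::ab_group_add) \<Rightarrow> 'y \<Rightarrow> 'y \<Rightarrow> 'r"
  assumes zero: "(\<lambda>x y. 0) \<in> C"
    and closed: "\<And>c d. c \<in> C \<Longrightarrow> d \<in> C \<Longrightarrow> (\<lambda>x y. c x y + d x y) \<in> C"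
    and additive: "\<And>c d. c \<in> C \<Longrightarrow> d \<in> C \<Longrightarrow> \<phi> (\<lambda>x y. c x y + d x y) = (\<lambda>x y. \<phi> c x y + \<phi> d x y)"
    and "finite A" "\<And>i. i \<in> A \<Longrightarrow> F i \<in> C"
  shows "msum F A \<in> C \<and> \<phi> (msum F A) = msum (\<lambda>i. \<phi> (F i)) A"
  using \<open>finite A\<close> \<open>\<And>i. i \<in> A \<Longrightarrow> F i \<in> C\<close>
proof (induction A rule: finite_induct)
  case empty
  have "\<phi> (\<lambda>x y. 0) x y = \<phi> (\<lambda>x y. 0) x y + \<phi> (\<lambda>x y. 0) x y" for x y
    using fun_cong[OF fun_cong[OF additive[OF zero zero]]] by simp
  then show ?case using zero by (simp add: msum_def fun_eq_iff)
next
  case (insert i A)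
  then show ?case using closed additive by (simp add: msum_def)
qed

lemma conv_assoc: "conv Y e (conv Y e f g) h = conv Y e f (conv Y e g h)"
proof (intro ext)
  fix x y
  have "conv Y e (conv Y e f g) h x y
      = (\<Sum>w\<in>Y. \<Sum>z\<in>Y. f x z * rinv (e z) * g z w * rinv (e w) * h w y)"
    unfolding conv_def by (simp add: sum_distrib_right)
  also have "\<dots> = (\<Sum>z\<in>Y. \<Sum>w\<in>Y. f x z * rinv (e z) * g z w * rinv (e w) * h w y)"
    by (rule sum.swap)
  also have "\<dots> = conv Y e f (conv Y e g h) x y"
    unfolding conv_def by (simp add: sum_distrib_left mult.assoc)
  finally show "conv Y e (conv Y e f g) h x y = conv Y e f (conv Y e g h) x y" .
qed

lemma conv_add_left: "conv Y e (\<lambda>x y. f x y + g x y) h = (\<lambda>x y. conv Y e f h x y + conv Y e g h x y)"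
  unfolding conv_def by (simp add: distrib_right sum.distrib)

lemma conv_add_right: "conv Y e h (\<lambda>x y. f x y + g x y) = (\<lambda>x y. conv Y e h f x y + conv Y e h g x y)"
  unfolding conv_def by (simp add: distrib_left sum.distrib)

lemma conv_zero_left: "conv Y e (\<lambda>x y. 0) h = (\<lambda>x y. 0)"
  unfolding conv_def by simp

lemma conv_zero_right: "conv Y e h (\<lambda>x y. 0) = (\<lambda>x y. 0)"
  unfolding conv_def by simp

lemma conv_msum_left: "conv Y e (msum F A) h = msum (\<lambda>i. conv Y e (F i) h) A"
  unfolding conv_def msum_def by (intro ext) (simp add: sum_distrib_right, rule sum.swap)

lemma conv_msum_right: "conv Y e h (msum F A) = msum (\<lambda>i. conv Y e h (F i)) A"
  unfolding conv_def msum_def by (intro ext) (simp add: sum_distrib_left mult.assoc, rule sum.swap)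

lemma k_algebra_module: "k_algebra sm \<Longrightarrow> module sm"
  unfolding k_algebra_def vector_space_def module_def by blast

lemma conv_scal_left:
  assumes "k_algebra sm"
  shows "conv Y e (scal sm c f) h = scal sm c (conv Y e f h)"
proof -
  have "sm c (f x z * rinv (e z) * h z y) = sm c (f x z) * rinv (e z) * h z y" for x y z
    using assms unfolding k_algebra_def by metis
  then show ?thesis
    unfolding conv_def scal_def by (simp add: module.scale_sum_right[OF k_algebra_module[OF assms]])
qed

lemma conv_scal_right:
  assumes "k_algebra sm"
  shows "conv Y e h (scal sm c f) = scal sm c (conv Y e h f)"
proof -
  have "sm c (h x z * rinv (e z) * f z y) = h x z * rinv (e z) * sm c (f z y)" for x y z
    using assms unfolding k_algebra_def by metis
  then show ?thesis
    unfolding conv_def scal_def by (simp add: module.scale_sum_right[OF k_algebra_module[OF assms]])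
qed

lemma rows_in_conv: "rows_in R f \<Longrightarrow> rows_in R (conv Y e f g)"
  unfolding rows_in_def conv_def by simp

lemma cols_in_conv: "cols_in R g \<Longrightarrow> cols_in R (conv Y e f g)"
  unfolding cols_in_def conv_def by simp

lemma gen_alg_msum:
  "finite A \<Longrightarrow> (\<And>i. i \<in> A \<Longrightarrow> F i \<in> gen_alg sm Y e S0) \<Longrightarrow> msum F A \<in> gen_alg sm Y e S0"
proof (induction A rule: finite_induct)
  case empty
  then show ?case by (simp add: msum_def gen_alg.gen_zero)
next
  case (insert i A)
  then show ?case using gen_alg.gen_add[of "F i" sm Y e S0 "msum F A"] by (simp add: msum_def)
qed

lemma gen_alg_support:
  assumes "k_algebra sm" "\<And>a. a \<in> S0 \<Longrightarrow> rows_in R a \<and> cols_in R' a" "a \<in> gen_alg sm Y e S0"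
  shows "rows_in R a \<and> cols_in R' a"
  using assms(3)
proof (induction rule: gen_alg.induct)
  case (gen_mult a b)
  then show ?case using rows_in_conv cols_in_conv by blast
qed (use assms(2) module.scale_zero_right[OF k_algebra_module[OF assms(1)]]
     in \<open>auto simp: rows_in_def cols_in_def scal_def\<close>)

lemma Yl_iff: "y \<in> Yl Y lab l \<longleftrightarrow> y \<in> Y \<and> lab y = l"
  unfolding Yl_def by simp

locale standing =
  fixes G :: "('g, 'b) monoid_scheme"
    and actR :: "'g \<Rightarrow> 'r::ring_1 \<Rightarrow> 'r"
    and sm :: "'k::field \<Rightarrow> 'r \<Rightarrow> 'r"
    and Lam :: "'l set" and om :: 'l
    and Y :: "'y set" and lab :: "'y \<Rightarrow> 'l"
    and actY :: "'g \<Rightarrow> 'y \<Rightarrow> 'y"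
    and p :: "'l \<Rightarrow> 'y \<Rightarrow> 'y"
    and e :: "'y \<Rightarrow> 'r"
    and T :: "'r set"
  assumes standing: "standing_assumptions G actR sm Lam om Y lab actY p e"
begin

abbreviation twisted_conv :: "('y \<Rightarrow> 'y \<Rightarrow> 'r) \<Rightarrow> ('y \<Rightarrow> 'y \<Rightarrow> 'r) \<Rightarrow> 'y \<Rightarrow> 'y \<Rightarrow> 'r"
    (infixl "\<star>" 70)
  where "f \<star> g \<equiv> conv Y e f g"

abbreviation "Yb \<equiv> Yl Y lab"
abbreviation "X\<^sub>\<omega> \<equiv> Yl Y lab om"
abbreviation "idem \<equiv> one_l Y lab e"
abbreviation "S \<equiv> Sg om Y lab p e"
abbreviation "M \<equiv> Mg om Y lab p e"
abbreviation "K \<equiv> Kg om Y lab p e"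
abbreviation "\<A> \<equiv> AT G actR sm Lam om Y lab actY p e T"
abbreviation "\<B> \<equiv> BT G actR sm Lam om Y lab actY p e T"
abbreviation "\<C> \<equiv> CT G actR sm Lam om Y lab actY p e T"
abbreviation "mu \<equiv> mfun om Y lab p e"

lemma group_G: "group G"
  using standing unfolding standing_assumptions_def by simp

lemma finite_Y: "finite Y"
  using standing unfolding standing_assumptions_def G_set_Y_def by simp

lemma finite_Lam: "finite Lam"
  using standing unfolding standing_assumptions_def by simp

lemma om_in_Lam: "om \<in> Lam"
  using standing unfolding standing_assumptions_def by simp

lemma lab_in_Lam: "y \<in> Y \<Longrightarrow> lab y \<in> Lam"
  using standing unfolding standing_assumptions_def G_set_Y_def by auto

lemma sm_k_algebra: "k_algebra sm"
  using standing unfolding standing_assumptions_def by simp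

lemma e_unit: "y \<in> Y \<Longrightarrow> is_unit_r (e y)"
  using standing unfolding standing_assumptions_def twist_def by simp

lemma e_rinv: "y \<in> Y \<Longrightarrow> rinv (e y) * e y = 1" "y \<in> Y \<Longrightarrow> e y * rinv (e y) = 1"
  using rinv_unit e_unit by blast+

lemma p_image: "l \<in> Lam \<Longrightarrow> p l ` X\<^sub>\<omega> = Yb l"
  using standing unfolding standing_assumptions_def proj_maps_def by simp

lemma p_om: "x \<in> X\<^sub>\<omega> \<Longrightarrow> p om x = x"
  using standing unfolding standing_assumptions_def proj_maps_def by simp

lemma X_subset: "X\<^sub>\<omega> \<subseteq> Y"
  unfolding Yl_def by auto

lemma p_mem: "l \<in> Lam \<Longrightarrow> x \<in> X\<^sub>\<omega> \<Longrightarrow> p l x \<in> Yb l"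
  using p_image by blast

lemma idem_conv: "idem l \<star> f = (\<lambda>x y. if x \<in> Yb l then f x y else 0)"
proof (intro ext)
  fix x y
  have "(idem l \<star> f) x y = (\<Sum>z\<in>Y. if z = x then (if x \<in> Yb l then f x y else 0) else 0)"
    unfolding conv_def one_l_def
    by (rule sum.cong) (auto simp: e_rinv mult.assoc[symmetric] Yl_iff)
  then show "(idem l \<star> f) x y = (if x \<in> Yb l then f x y else 0)"
    by (auto simp: Yl_iff finite_Y)
qed

lemma conv_idem: "f \<star> idem l = (\<lambda>x y. if y \<in> Yb l then f x y else 0)"
proof (intro ext)
  fix x y
  have "(f \<star> idem l) x y = (\<Sum>z\<in>Y. if z = y then (if y \<in> Yb l then f x y else 0) else 0)"
    unfolding conv_def one_l_def
    by (rule sum.cong) (auto simp: e_rinv mult.assoc Yl_iff)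
  then show "(f \<star> idem l) x y = (if y \<in> Yb l then f x y else 0)"
    by (auto simp: Yl_iff finite_Y)
qed

lemma idem_conv_rows_in: "rows_in (Yb l) f \<Longrightarrow> idem l \<star> f = f"
  unfolding idem_conv rows_in_def by (intro ext) auto

lemma conv_idem_cols_in: "cols_in (Yb l) f \<Longrightarrow> f \<star> idem l = f"
  unfolding conv_idem cols_in_def by (intro ext) auto

lemma idem_idem: "idem l \<star> idem l = idem l"
  by (rule idem_conv_rows_in) (auto simp: rows_in_def one_l_def)

lemma idem_conv_conv_idem:
  assumes "rows_in (Yb r) a" "cols_in (Yb s) a"
  shows "idem l \<star> a \<star> idem m = (if l = r \<and> m = s then a else (\<lambda>x y. 0))"
  using assms unfolding idem_conv conv_idem rows_in_def cols_in_def
  by (intro ext) (auto simp: Yl_iff)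

lemma conv_decomp: "f \<star> g = msum (\<lambda>n. (f \<star> idem n) \<star> (idem n \<star> g)) Lam"
proof -
  have "(f \<star> idem n) \<star> (idem n \<star> g) = f \<star> (idem n \<star> idem n) \<star> g" for n
    by (simp only: conv_assoc)
  then have "(f \<star> idem n) \<star> (idem n \<star> g) = (f \<star> idem n) \<star> g" for n
    by (simp only: idem_idem)
  moreover have "msum (\<lambda>n. f \<star> idem n \<star> g) Lam x y = (f \<star> g) x y" for x y
  proof -
    have "msum (\<lambda>n. f \<star> idem n \<star> g) Lam x y
        = (\<Sum>n\<in>Lam. \<Sum>z\<in>Y. if n = lab z then f x z * rinv (e z) * g z y else 0)"
      unfolding msum_def conv_idem by (unfold conv_def, intro sum.cong refl) (auto simp: Yl_iff)
    also have "\<dots> = (\<Sum>z\<in>Y. \<Sum>n\<in>Lam. if n = lab z then f x z * rinv (e z) * g z y else 0)"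
      by (rule sum.swap)
    also have "\<dots> = (f \<star> g) x y"
      unfolding conv_def using finite_Lam lab_in_Lam by (intro sum.cong) auto
    finally show ?thesis .
  qed
  ultimately show ?thesis by (simp add: fun_eq_iff msum_def)
qed

lemma K_om: "K om = idem om"
  unfolding Kg_def one_l_def by (intro ext) (auto simp: p_om)

lemma S_om: "S om = idem om"
  unfolding Sg_def one_l_def by (intro ext) (auto simp: p_om)

lemma M_om: "M om = idem om"
  unfolding Mg_def one_l_def by (intro ext) (auto simp: p_om)

lemma S_conv_M:
  assumes l: "l \<in> Lam"
  shows "S l \<star> M l = K l"
proof (intro ext)
  fix x x'
  show "(S l \<star> M l) x x' = K l x x'"
  proof (cases "x \<in> X\<^sub>\<omega>")
    case True
    have p: "p l x \<in> Yb l" using p_mem[OF l True] .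
    then have "p l x \<in> Y" by (simp add: Yl_iff)
    have "(S l \<star> M l) x x' = (\<Sum>z\<in>Y. if z = p l x then K l x x' else 0)"
      unfolding conv_def Sg_def Mg_def Kg_def
      using True p \<open>p l x \<in> Y\<close> by (intro sum.cong) (auto simp: e_rinv mult.assoc)
    with \<open>p l x \<in> Y\<close> show ?thesis by (simp add: finite_Y)
  next
    case False
    then show ?thesis unfolding conv_def Sg_def Kg_def by simp
  qed
qed

lemma K_in_BT: "l \<in> Lam \<Longrightarrow> K l \<in> \<B>"
  unfolding BT_def by (auto intro: gen_alg.gen_base)

lemma BT_subset_AT: "b \<in> \<B> \<Longrightarrow> b \<in> \<A>"
  unfolding AT_def by (auto intro: gen_alg.gen_base)

lemma S_in_AT: "l \<in> Lam \<Longrightarrow> S l \<in> \<A>"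
  unfolding AT_def by (auto intro: gen_alg.gen_base)

lemma M_in_AT: "l \<in> Lam \<Longrightarrow> M l \<in> \<A>"
  unfolding AT_def by (auto intro: gen_alg.gen_base)

lemma idem_om_in_BT: "idem om \<in> \<B>"
  using K_in_BT[OF om_in_Lam] K_om by simp

lemma BT_conv: "a \<in> \<B> \<Longrightarrow> b \<in> \<B> \<Longrightarrow> a \<star> b \<in> \<B>"
  unfolding BT_def by (rule gen_alg.gen_mult)

lemma AT_conv: "a \<in> \<A> \<Longrightarrow> b \<in> \<A> \<Longrightarrow> a \<star> b \<in> \<A>"
  unfolding AT_def by (rule gen_alg.gen_mult)

lemma BT_msum: "finite I \<Longrightarrow> (\<And>i. i \<in> I \<Longrightarrow> F i \<in> \<B>) \<Longrightarrow> msum F I \<in> \<B>"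
  unfolding BT_def by (rule gen_alg_msum)

lemma AT_msum: "finite I \<Longrightarrow> (\<And>i. i \<in> I \<Longrightarrow> F i \<in> \<A>) \<Longrightarrow> msum F I \<in> \<A>"
  unfolding AT_def by (rule gen_alg_msum)

lemma BT_support: "b \<in> \<B> \<Longrightarrow> rows_in X\<^sub>\<omega> b \<and> cols_in X\<^sub>\<omega> b"
  unfolding BT_def
  by (rule gen_alg_support[OF sm_k_algebra]) (auto simp: rows_in_def cols_in_def Kg_def diag_om_def)

lemma AT_support: "a \<in> \<A> \<Longrightarrow> rows_in Y a \<and> cols_in Y a"
  unfolding AT_def
proof (rule gen_alg_support[OF sm_k_algebra])
  fix a assume "a \<in> \<B> \<union> S ` Lam \<union> M ` Lam"
  then show "rows_in Y a \<and> cols_in Y a"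
    using BT_support rows_in_mono[OF X_subset] cols_in_mono[OF X_subset]
    by (auto simp: rows_in_def cols_in_def Sg_def Mg_def Yl_iff)
qed

lemma BT_corner: "b \<in> \<B> \<Longrightarrow> idem om \<star> b \<star> idem om = b"
  using BT_support idem_conv_rows_in conv_idem_cols_in by metis

definition factors_through_BT :: "('y \<Rightarrow> 'y \<Rightarrow> 'r) \<Rightarrow> bool" where
  "factors_through_BT a \<longleftrightarrow>
     (\<forall>l\<in>Lam. \<forall>m\<in>Lam. \<exists>b\<in>\<B>. idem l \<star> a \<star> idem m = M l \<star> b \<star> S m)"

lemma factors_through_BT_single_block:
  assumes rows: "rows_in (Yb r) a" and cols: "cols_in (Yb s) a"
    and "b \<in> \<B>" "a = M r \<star> b \<star> S s"
  shows "factors_through_BT a"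
  unfolding factors_through_BT_def
proof (intro ballI)
  fix l m
  show "\<exists>b\<in>\<B>. idem l \<star> a \<star> idem m = M l \<star> b \<star> S m"
  proof (cases "l = r \<and> m = s")
    case True
    then show ?thesis using assms idem_conv_conv_idem[OF rows cols] by auto
  next
    case False
    have "(\<lambda>x y. 0) \<in> \<B>"
      unfolding BT_def by (rule gen_alg.gen_zero)
    moreover have "idem l \<star> a \<star> idem m = M l \<star> (\<lambda>x y. 0) \<star> S m"
      using False idem_conv_conv_idem[OF rows cols] by (simp only: conv_zero_left conv_zero_right if_False)
    ultimately show ?thesis by blast
  qed
qed

lemma factors_through_BT_generator:
  assumes "a \<in> \<B> \<union> S ` Lam \<union> M ` Lam"
  shows "factors_through_BT a"
proof -
  have rows_S: "rows_in X\<^sub>\<omega> (S n)" and cols_S: "cols_in (Yb n) (S n)"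
    and rows_M: "rows_in (Yb n) (M n)" and cols_M: "cols_in X\<^sub>\<omega> (M n)" for n
    by (auto simp: rows_in_def cols_in_def Sg_def Mg_def)
  have "factors_through_BT (S n)" for n
    by (rule factors_through_BT_single_block[OF rows_S cols_S idem_om_in_BT])
      (simp add: M_om idem_idem idem_conv_rows_in[OF rows_S])
  moreover have "factors_through_BT (M n)" for n
    by (rule factors_through_BT_single_block[OF rows_M cols_M idem_om_in_BT])
      (simp add: S_om conv_assoc idem_idem conv_idem_cols_in[OF cols_M])
  moreover have "factors_through_BT b" if "b \<in> \<B>" for b
    using BT_support[OF that] BT_corner[OF that] \<open>b \<in> \<B>\<close>
    by (intro factors_through_BT_single_block[of om b om b]) (simp_all add: M_om S_om)
  ultimately show ?thesis using assms by blast
qed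

lemma factors_through_BT_add:
  assumes "factors_through_BT a" "factors_through_BT a'"
  shows "factors_through_BT (\<lambda>x y. a x y + a' x y)"
  unfolding factors_through_BT_def
proof (intro ballI)
  fix l m assume "l \<in> Lam" "m \<in> Lam"
  then obtain b b' where "b \<in> \<B>" and b: "idem l \<star> a \<star> idem m = M l \<star> b \<star> S m"
    and "b' \<in> \<B>" and b': "idem l \<star> a' \<star> idem m = M l \<star> b' \<star> S m"
    using assms unfolding factors_through_BT_def by meson
  have "(\<lambda>x y. b x y + b' x y) \<in> \<B>"
    using \<open>b \<in> \<B>\<close> \<open>b' \<in> \<B>\<close> unfolding BT_def by (rule gen_alg.gen_add)
  moreover have "idem l \<star> (\<lambda>x y. a x y + a' x y) \<star> idem m = M l \<star> (\<lambda>x y. b x y + b' x y) \<star> S m"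
    by (simp only: conv_add_left conv_add_right b b')
  ultimately show "\<exists>b\<in>\<B>. idem l \<star> (\<lambda>x y. a x y + a' x y) \<star> idem m = M l \<star> b \<star> S m"
    by blast
qed

lemma factors_through_BT_scal:
  assumes "factors_through_BT a"
  shows "factors_through_BT (scal sm c a)"
  unfolding factors_through_BT_def
proof (intro ballI)
  fix l m assume "l \<in> Lam" "m \<in> Lam"
  then obtain b where "b \<in> \<B>" and b: "idem l \<star> a \<star> idem m = M l \<star> b \<star> S m"
    using assms unfolding factors_through_BT_def by meson
  have "scal sm c b \<in> \<B>"
    using \<open>b \<in> \<B>\<close> unfolding BT_def by (rule gen_alg.gen_scal)
  moreover have "idem l \<star> scal sm c a \<star> idem m = M l \<star> scal sm c b \<star> S m"
    by (simp only: conv_scal_left[OF sm_k_algebra] conv_scal_right[OF sm_k_algebra] b)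
  ultimately show "\<exists>b\<in>\<B>. idem l \<star> scal sm c a \<star> idem m = M l \<star> b \<star> S m"
    by blast
qed

lemma factors_through_BT_conv:
  assumes a: "factors_through_BT a" and a': "factors_through_BT a'"
  shows "factors_through_BT (a \<star> a')"
  unfolding factors_through_BT_def
proof (intro ballI)
  fix l m assume l: "l \<in> Lam" and m: "m \<in> Lam"
  have ex_b: "\<forall>n\<in>Lam. \<exists>b. b \<in> \<B> \<and> idem l \<star> a \<star> idem n = M l \<star> b \<star> S n"
    using a l unfolding factors_through_BT_def by blast
  obtain b where b: "\<And>n. n \<in> Lam \<Longrightarrow> b n \<in> \<B> \<and> idem l \<star> a \<star> idem n = M l \<star> b n \<star> S n"
    using bchoice[OF ex_b] by blast
  have ex_b': "\<forall>n\<in>Lam. \<exists>b. b \<in> \<B> \<and> idem n \<star> a' \<star> idem m = M n \<star> b \<star> S m"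
    using a' m unfolding factors_through_BT_def by blast
  obtain b' where b': "\<And>n. n \<in> Lam \<Longrightarrow> b' n \<in> \<B> \<and> idem n \<star> a' \<star> idem m = M n \<star> b' n \<star> S m"
    using bchoice[OF ex_b'] by blast
  have "idem l \<star> (a \<star> a') \<star> idem m = (idem l \<star> a) \<star> (a' \<star> idem m)"
    by (simp only: conv_assoc)
  also have "\<dots> = msum (\<lambda>n. (idem l \<star> a \<star> idem n) \<star> (idem n \<star> (a' \<star> idem m))) Lam"
    by (rule conv_decomp)
  also have "\<dots> = msum (\<lambda>n. (idem l \<star> a \<star> idem n) \<star> (idem n \<star> a' \<star> idem m)) Lam"
    by (simp only: conv_assoc)
  also have "\<dots> = msum (\<lambda>n. M l \<star> (b n \<star> K n \<star> b' n) \<star> S m) Lam"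
  proof (rule msum_cong)
    fix n assume n: "n \<in> Lam"
    have "(idem l \<star> a \<star> idem n) \<star> (idem n \<star> a' \<star> idem m)
        = (M l \<star> b n \<star> S n) \<star> (M n \<star> b' n \<star> S m)"
      using b[OF n] b'[OF n] by simp
    also have "\<dots> = M l \<star> (b n \<star> (S n \<star> M n) \<star> b' n) \<star> S m"
      by (simp only: conv_assoc)
    finally show "(idem l \<star> a \<star> idem n) \<star> (idem n \<star> a' \<star> idem m)
        = M l \<star> (b n \<star> K n \<star> b' n) \<star> S m"
      using S_conv_M[OF n] by simp
  qed
  also have "\<dots> = M l \<star> msum (\<lambda>n. b n \<star> K n \<star> b' n) Lam \<star> S m"
    by (simp only: conv_msum_left conv_msum_right)
  finally show "\<exists>b\<in>\<B>. idem l \<star> (a \<star> a') \<star> idem m = M l \<star> b \<star> S m"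
    using b b' K_in_BT by (blast intro: BT_msum[OF finite_Lam] BT_conv)
qed

lemma AT_factors_through_BT: "a \<in> \<A> \<Longrightarrow> factors_through_BT a"
  unfolding AT_def
proof (induction rule: gen_alg.induct)
  case gen_zero
  show ?case
    using factors_through_BT_single_block[of om "\<lambda>x y. 0" om "\<lambda>x y. 0"]
    by (simp add: rows_in_def cols_in_def BT_def gen_alg.gen_zero conv_zero_left conv_zero_right)
qed (simp_all add: factors_through_BT_generator factors_through_BT_add
       factors_through_BT_scal factors_through_BT_conv)

theorem BT_eq_corner_AT: "\<B> = (\<lambda>a. idem om \<star> a \<star> idem om) ` \<A>"
proof (intro equalityI subsetI)
  fix b assume "b \<in> \<B>"
  then show "b \<in> (\<lambda>a. idem om \<star> a \<star> idem om) ` \<A>"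
    using BT_corner BT_subset_AT by (metis image_eqI)
next
  fix c assume "c \<in> (\<lambda>a. idem om \<star> a \<star> idem om) ` \<A>"
  then obtain a where "a \<in> \<A>" "c = idem om \<star> a \<star> idem om" by blast
  then obtain b where "b \<in> \<B>" "c = M om \<star> b \<star> S om"
    using AT_factors_through_BT om_in_Lam unfolding factors_through_BT_def by blast
  then show "c \<in> \<B>" using BT_corner by (simp add: M_om S_om)
qed

lemma AT_block_om_in_BT:
  assumes "a \<in> \<A>" "rows_in X\<^sub>\<omega> a" "cols_in X\<^sub>\<omega> a"
  shows "a \<in> \<B>"
proof -
  have "a = idem om \<star> a \<star> idem om"
    using assms(2,3) by (simp add: idem_conv_rows_in conv_idem_cols_in)
  then show ?thesis unfolding BT_eq_corner_AT using assms(1) by (rule image_eqI)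
qed

lemma row_decomp: "rows_in Y c \<Longrightarrow> c = msum (\<lambda>l. idem l \<star> c) Lam"
proof (intro ext)
  fix x y assume r: "rows_in Y c"
  show "c x y = msum (\<lambda>l. idem l \<star> c) Lam x y"
  proof (cases "x \<in> Y")
    case True
    have "msum (\<lambda>l. idem l \<star> c) Lam x y = (\<Sum>l\<in>Lam. if l = lab x then c x y else 0)"
      unfolding msum_def idem_conv using True by (intro sum.cong) (auto simp: Yl_iff)
    also have "\<dots> = c x y" using lab_in_Lam[OF True] finite_Lam by simp
    finally show ?thesis by simp
  next
    case False
    then show ?thesis using r unfolding msum_def idem_conv rows_in_def by (simp add: Yl_iff)
  qed
qed

lemma idem_om_cols_in: "cols_in X\<^sub>\<omega> (idem om)"
  by (simp add: cols_in_def one_l_def)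

lemma CT_iff: "c \<in> \<C> \<longleftrightarrow> c \<in> \<A> \<and> cols_in X\<^sub>\<omega> c"
proof
  assume "c \<in> \<C>"
  then obtain a where "a \<in> \<A>" "c = a \<star> idem om" unfolding CT_def by blast
  then show "c \<in> \<A> \<and> cols_in X\<^sub>\<omega> c"
    using AT_conv BT_subset_AT[OF idem_om_in_BT] cols_in_conv[OF idem_om_cols_in] by blast
next
  assume "c \<in> \<A> \<and> cols_in X\<^sub>\<omega> c"
  then show "c \<in> \<C>" unfolding CT_def using conv_idem_cols_in by (metis image_eqI)
qed

lemma CT_conv_left: "a \<in> \<A> \<Longrightarrow> c \<in> \<C> \<Longrightarrow> a \<star> c \<in> \<C>"
  unfolding CT_iff using AT_conv cols_in_conv by blast

lemma CT_conv_right: "c \<in> \<C> \<Longrightarrow> b \<in> \<B> \<Longrightarrow> c \<star> b \<in> \<C>"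
  unfolding CT_iff using AT_conv BT_subset_AT BT_support cols_in_conv by blast

lemma CT_add: "c \<in> \<C> \<Longrightarrow> d \<in> \<C> \<Longrightarrow> (\<lambda>x y. c x y + d x y) \<in> \<C>"
  unfolding CT_iff AT_def by (auto intro: gen_alg.gen_add simp: cols_in_def)

lemma CT_scal:
  assumes "c \<in> \<C>"
  shows "scal sm k c \<in> \<C>"
proof -
  have "scal sm k c \<in> \<A>"
    using assms unfolding CT_iff AT_def by (blast intro: gen_alg.gen_scal)
  moreover have "cols_in X\<^sub>\<omega> (scal sm k c)"
    using assms module.scale_zero_right[OF k_algebra_module[OF sm_k_algebra]]
    unfolding CT_iff cols_in_def scal_def by simp
  ultimately show ?thesis unfolding CT_iff by blast
qed

lemma CT_zero: "(\<lambda>x y. 0) \<in> \<C>"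
  unfolding CT_iff AT_def by (auto intro: gen_alg.gen_zero simp: cols_in_def)

lemma idem_om_in_CT: "idem om \<in> \<C>"
  using BT_subset_AT[OF idem_om_in_BT] idem_om_cols_in by (simp add: CT_iff)

lemma M_in_CT: "l \<in> Lam \<Longrightarrow> M l \<in> \<C>"
  using M_in_AT by (simp add: CT_iff cols_in_def Mg_def)

lemma conv_right_in_End_left:
  assumes "b \<in> \<B>"
  shows "restrict (\<lambda>c. c \<star> b) \<C> \<in> End_left sm Y e \<A> \<C>"
  unfolding End_left_def
proof (intro CollectI conjI ballI allI)
  show "restrict (\<lambda>c. c \<star> b) \<C> \<in> \<C> \<rightarrow> \<C>" using assms CT_conv_right by simp
  fix c assume c: "c \<in> \<C>"
  show "restrict (\<lambda>c. c \<star> b) \<C> (scal sm k c) = scal sm k (restrict (\<lambda>c. c \<star> b) \<C> c)" for k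
    using c CT_scal by (simp add: conv_scal_left[OF sm_k_algebra])
  show "restrict (\<lambda>c. c \<star> b) \<C> (a \<star> c) = a \<star> restrict (\<lambda>c. c \<star> b) \<C> c" if "a \<in> \<A>" for a
    using that c CT_conv_left by (simp add: conv_assoc)
  fix d assume "d \<in> \<C>"
  then show "restrict (\<lambda>c. c \<star> b) \<C> (\<lambda>x y. c x y + d x y)
      = (\<lambda>x y. restrict (\<lambda>c. c \<star> b) \<C> c x y + restrict (\<lambda>c. c \<star> b) \<C> d x y)"
    using c CT_add by (simp add: conv_add_left)
qed simp

lemma End_left_eq_conv_right:
  assumes \<phi>: "\<phi> \<in> End_left sm Y e \<A> \<C>"
  shows "\<phi> (idem om) \<in> \<B> \<and> \<phi> = restrict (\<lambda>c. c \<star> \<phi> (idem om)) \<C>"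
proof
  have A_linear: "\<And>a c. a \<in> \<A> \<Longrightarrow> c \<in> \<C> \<Longrightarrow> \<phi> (a \<star> c) = a \<star> \<phi> c"
    using \<phi> unfolding End_left_def by blast
  have "\<phi> (idem om) \<in> \<C>"
    using \<phi> idem_om_in_CT unfolding End_left_def by blast
  moreover have "\<phi> (idem om) = idem om \<star> \<phi> (idem om)"
    using A_linear[OF BT_subset_AT[OF idem_om_in_BT] idem_om_in_CT] by (simp add: idem_idem)
  ultimately have "\<phi> (idem om) = idem om \<star> \<phi> (idem om) \<star> idem om" "\<phi> (idem om) \<in> \<A>"
    unfolding CT_iff by (simp_all add: conv_idem_cols_in)
  then show "\<phi> (idem om) \<in> \<B>"
    unfolding BT_eq_corner_AT by (rule image_eqI)
  show "\<phi> = restrict (\<lambda>c. c \<star> \<phi> (idem om)) \<C>"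
  proof
    fix c
    show "\<phi> c = restrict (\<lambda>c. c \<star> \<phi> (idem om)) \<C> c"
    proof (cases "c \<in> \<C>")
      case True
      then have "\<phi> c = \<phi> (c \<star> idem om)" unfolding CT_iff by (simp add: conv_idem_cols_in)
      also have "\<dots> = c \<star> \<phi> (idem om)" using A_linear True idem_om_in_CT by (simp add: CT_iff)
      finally show ?thesis using True by simp
    next
      case False
      then show ?thesis using \<phi> unfolding End_left_def extensional_def by simp
    qed
  qed
qed

theorem End_left_CT: "bij_betw (\<lambda>b. restrict (\<lambda>c. c \<star> b) \<C>) \<B> (End_left sm Y e \<A> \<C>)"
proof (rule bij_betw_imageI)
  show "inj_on (\<lambda>b. restrict (\<lambda>c. c \<star> b) \<C>) \<B>"
  proof (rule inj_onI)
    fix b b' assume "b \<in> \<B>" "b' \<in> \<B>" and eq: "restrict (\<lambda>c. c \<star> b) \<C> = restrict (\<lambda>c. c \<star> b') \<C>"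
    have "idem om \<star> b = idem om \<star> b'"
      using fun_cong[OF eq, of "idem om"] idem_om_in_CT by simp
    then show "b = b'"
      using \<open>b \<in> \<B>\<close> \<open>b' \<in> \<B>\<close> BT_support idem_conv_rows_in by metis
  qed
  show "(\<lambda>b. restrict (\<lambda>c. c \<star> b) \<C>) ` \<B> = End_left sm Y e \<A> \<C>"
    using conv_right_in_End_left End_left_eq_conv_right by blast
qed

lemma actY_closed: "g \<in> carrier G \<Longrightarrow> y \<in> Y \<Longrightarrow> actY g y \<in> Y \<and> lab (actY g y) = lab y"
  using standing unfolding standing_assumptions_def G_set_Y_def by simp

lemma actY_inv_cancel:
  assumes g: "g \<in> carrier G" and y: "y \<in> Y"
  shows "actY (inv\<^bsub>G\<^esub> g) (actY g y) = y"
proof -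
  have "actY (inv\<^bsub>G\<^esub> g) (actY g y) = actY (inv\<^bsub>G\<^esub> g \<otimes>\<^bsub>G\<^esub> g) y"
    using standing g y group.inv_closed[OF group_G g]
    unfolding standing_assumptions_def G_set_Y_def by simp
  also have "\<dots> = y"
    using standing y group.l_inv[OF group_G g] unfolding standing_assumptions_def G_set_Y_def by simp
  finally show ?thesis .
qed

lemma p_equivariant: "l \<in> Lam \<Longrightarrow> g \<in> carrier G \<Longrightarrow> x \<in> X\<^sub>\<omega> \<Longrightarrow> p l (actY g x) = actY g (p l x)"
  using standing unfolding standing_assumptions_def proj_maps_def by simp

lemma e_equivariant: "g \<in> carrier G \<Longrightarrow> y \<in> Y \<Longrightarrow> e (actY g y) = actR g (e y)"
  using standing unfolding standing_assumptions_def twist_def equivariant1_def by simp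

lemma actR_hom:
  "g \<in> carrier G \<Longrightarrow> actR g 1 = 1 \<and> (\<forall>x y. actR g (x + y) = actR g x + actR g y \<and> actR g (x * y) = actR g x * actR g y)"
  using standing unfolding standing_assumptions_def G_acts_R_def by simp

lemma actR_rinv: "g \<in> carrier G \<Longrightarrow> is_unit_r u \<Longrightarrow> rinv (actR g u) = actR g (rinv u)"
  using actR_hom hom_rinv by metis

lemma actR_sum:
  assumes "g \<in> carrier G"
  shows "actR g (\<Sum>i\<in>I. f i) = (\<Sum>i\<in>I. actR g (f i))"
proof -
  have add: "actR g (x + y) = actR g x + actR g y" for x y using actR_hom[OF assms] by blast
  then have "actR g 0 = 0" by (metis add_cancel_right_right add_0)
  from sum_comp_morphism[of "actR g" f I, OF this add] show ?thesis by (simp add: comp_def)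
qed

lemma fibre_image:
  assumes l: "l \<in> Lam" and g: "g \<in> carrier G" and y: "y \<in> Y"
  shows "{x \<in> X\<^sub>\<omega>. p l x = actY g y} = actY g ` {x \<in> X\<^sub>\<omega>. p l x = y}"
proof (intro equalityI subsetI)
  fix z assume "z \<in> actY g ` {x \<in> X\<^sub>\<omega>. p l x = y}"
  then obtain x where x: "x \<in> X\<^sub>\<omega>" "p l x = y" "z = actY g x" by blast
  then show "z \<in> {x \<in> X\<^sub>\<omega>. p l x = actY g y}"
    using actY_closed[OF g] p_equivariant[OF l g] X_subset by (auto simp: Yl_iff)
next
  fix z assume z: "z \<in> {x \<in> X\<^sub>\<omega>. p l x = actY g y}"
  have g': "inv\<^bsub>G\<^esub> g \<in> carrier G" using group.inv_closed[OF group_G g] .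
  have "inv\<^bsub>G\<^esub> (inv\<^bsub>G\<^esub> g) = g" using group.inv_inv[OF group_G g] .
  then have "z = actY g (actY (inv\<^bsub>G\<^esub> g) z)"
    using actY_inv_cancel[OF g'] z X_subset by auto
  moreover have "actY (inv\<^bsub>G\<^esub> g) z \<in> X\<^sub>\<omega>"
    using actY_closed[OF g'] z X_subset by (auto simp: Yl_iff)
  moreover have "p l (actY (inv\<^bsub>G\<^esub> g) z) = y"
    using p_equivariant[OF l g'] z actY_inv_cancel[OF g y] by simp
  ultimately show "z \<in> actY g ` {x \<in> X\<^sub>\<omega>. p l x = y}" by blast
qed

lemma mu_equivariant:
  assumes g: "g \<in> carrier G" and y: "y \<in> Y"
  shows "mu (actY g y) = actR g (mu y)"
proof -
  define F where "F = {x \<in> X\<^sub>\<omega>. p (lab y) x = y}"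
  have F: "F \<subseteq> Y" using X_subset unfolding F_def by blast
  have "inj_on (actY g) F"
  proof (rule inj_onI)
    fix x x' assume "x \<in> F" "x' \<in> F" "actY g x = actY g x'"
    then show "x = x'" using actY_inv_cancel[OF g] F by (metis subsetD)
  qed
  then have "mu (actY g y) = (\<Sum>x\<in>F. rinv (e (actY g x)) * e (actY g y))"
    unfolding mfun_def actY_closed[OF g y, THEN conjunct2]
      fibre_image[OF lab_in_Lam[OF y] g y, folded F_def] by (simp add: sum.reindex)
  also have "\<dots> = (\<Sum>x\<in>F. actR g (rinv (e x) * e y))"
  proof (rule sum.cong)
    fix x assume "x \<in> F"
    then have "x \<in> Y" using F by blast
    then show "rinv (e (actY g x)) * e (actY g y) = actR g (rinv (e x) * e y)"
      using e_equivariant[OF g] y actR_rinv[OF g e_unit] actR_hom[OF g] by simp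
  qed simp
  also have "\<dots> = actR g (mu y)"
    unfolding mfun_def F_def by (rule actR_sum[OF g, symmetric])
  finally show ?thesis .
qed

end

locale star_condition = standing +
  assumes star: "cond_star om Y lab p e T"
begin

abbreviation t where
  "t l \<equiv> diag_om om Y lab e (\<lambda>x. rinv (mu (p l x)))"

lemma mu_unit: "y \<in> Y \<Longrightarrow> is_unit_r (mu y) \<and> mu y \<in> T \<and> rinv (mu y) \<in> T"
  using star unfolding cond_star_def by blast

lemma t_in_BT:
  assumes l: "l \<in> Lam"
  shows "t l \<in> \<B>"
proof -
  have pY: "p l x \<in> Y" if "x \<in> X\<^sub>\<omega>" for x
    using p_mem[OF l that] by (simp add: Yl_iff)
  have "equivariant1 G actR actY X\<^sub>\<omega> (\<lambda>x. rinv (mu (p l x)))"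
    unfolding equivariant1_def
    using p_equivariant[OF l] mu_equivariant pY actR_rinv mu_unit by simp
  moreover have "\<forall>x\<in>X\<^sub>\<omega>. rinv (mu (p l x)) \<in> T"
    using mu_unit pY by blast
  ultimately show ?thesis
    unfolding BT_def by (blast intro: gen_alg.gen_base)
qed

lemma M_conv_t:
  "M l \<star> t l = (\<lambda>y x. if x \<in> X\<^sub>\<omega> \<and> y \<in> Yb l \<and> y = p l x then e y * rinv (mu y) else 0)"
proof (intro ext)
  fix y x
  have "(M l \<star> t l) y x = (\<Sum>z\<in>Y. if z = x \<and> x \<in> X\<^sub>\<omega> then M l y x * rinv (e x) * (e x * rinv (mu (p l x))) else 0)"
    unfolding conv_def by (rule sum.cong) (auto simp: diag_om_def)
  also have "\<dots> = (if x \<in> X\<^sub>\<omega> then M l y x * (rinv (e x) * e x) * rinv (mu (p l x)) else 0)"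
    using X_subset finite_Y by (auto simp: mult.assoc)
  also have "\<dots> = (if x \<in> X\<^sub>\<omega> \<and> y \<in> Yb l \<and> y = p l x then e y * rinv (mu y) else 0)"
    using X_subset by (auto simp: e_rinv Mg_def)
  finally show "(M l \<star> t l) y x = (if x \<in> X\<^sub>\<omega> \<and> y \<in> Yb l \<and> y = p l x then e y * rinv (mu y) else 0)" .
qed

text \<open>This is where condition (star) enters: summing over the fibre of p l produces mu y, which t l cancels.\<close>
lemma M_t_S: "M l \<star> t l \<star> S l = idem l"
proof (intro ext)
  fix y y'
  show "(M l \<star> t l \<star> S l) y y' = idem l y y'"
  proof (cases "y \<in> Yb l \<and> y' = y")
    case True
    then have "y \<in> Y" "lab y = l" by (auto simp: Yl_iff)
    have "(M l \<star> t l \<star> S l) y y'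
        = (\<Sum>x\<in>Y. if x \<in> X\<^sub>\<omega> \<and> p l x = y then e y * rinv (mu y) * (rinv (e x) * e y) else 0)"
      unfolding M_conv_t
      by (unfold conv_def, rule sum.cong) (use True in \<open>auto simp: Sg_def mult.assoc\<close>)
    also have "\<dots> = (\<Sum>x\<in>{x \<in> Y. x \<in> X\<^sub>\<omega> \<and> p l x = y}. e y * rinv (mu y) * (rinv (e x) * e y))"
      using finite_Y by (simp add: sum.inter_filter)
    also have "{x \<in> Y. x \<in> X\<^sub>\<omega> \<and> p l x = y} = {x \<in> X\<^sub>\<omega>. p (lab y) x = y}"
      using X_subset \<open>lab y = l\<close> by auto
    also have "(\<Sum>x\<in>{x \<in> X\<^sub>\<omega>. p (lab y) x = y}. e y * rinv (mu y) * (rinv (e x) * e y))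
        = e y * rinv (mu y) * mu y"
      unfolding mfun_def by (simp add: sum_distrib_left)
    also have "\<dots> = e y"
      using rinv_unit(1)[of "mu y"] mu_unit[OF \<open>y \<in> Y\<close>] by (simp add: mult.assoc)
    finally show ?thesis using True by (simp add: one_l_def)
  next
    case False
    have "(M l \<star> t l \<star> S l) y y' = (\<Sum>x\<in>Y. 0)"
      unfolding M_conv_t by (unfold conv_def, rule sum.cong) (use False in \<open>auto simp: Sg_def\<close>)
    then show ?thesis using False by (auto simp: one_l_def)
  qed
qed

lemma conv_M_apply:
  assumes l: "l \<in> Lam" and x: "x \<in> X\<^sub>\<omega>"
  shows "(a \<star> M l) y x = a y (p l x)"
proof -
  have px: "p l x \<in> Yb l" using p_mem[OF l x] .
  then have "p l x \<in> Y" by (simp add: Yl_iff)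
  have "(a \<star> M l) y x = (\<Sum>w\<in>Y. if w = p l x then a y (p l x) else 0)"
    unfolding conv_def
    by (rule sum.cong) (use px x \<open>p l x \<in> Y\<close> in \<open>auto simp: Mg_def e_rinv mult.assoc\<close>)
  then show ?thesis using \<open>p l x \<in> Y\<close> finite_Y by simp
qed

lemma CT_decomp:
  assumes c: "c \<in> \<C>"
  shows "c = msum (\<lambda>l. M l \<star> (t l \<star> S l \<star> c)) Lam"
    and "l \<in> Lam \<Longrightarrow> t l \<star> S l \<star> c \<in> \<B>"
proof -
  have "c = msum (\<lambda>l. idem l \<star> c) Lam"
    using c CT_iff AT_support row_decomp by blast
  also have "\<dots> = msum (\<lambda>l. M l \<star> (t l \<star> S l \<star> c)) Lam"
    by (rule msum_cong) (simp only: M_t_S[symmetric] conv_assoc)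
  finally show "c = msum (\<lambda>l. M l \<star> (t l \<star> S l \<star> c)) Lam" .
next
  assume l: "l \<in> Lam"
  have "rows_in X\<^sub>\<omega> (t l)" by (simp add: rows_in_def diag_om_def)
  then show "t l \<star> S l \<star> c \<in> \<B>"
    using c t_in_BT[OF l] S_in_AT[OF l] unfolding CT_iff
    by (intro AT_block_om_in_BT) (auto intro: AT_conv BT_subset_AT rows_in_conv cols_in_conv)
qed

lemma conv_left_in_End_right:
  assumes "a \<in> \<A>"
  shows "restrict (\<lambda>c. a \<star> c) \<C> \<in> End_right sm Y e \<B> \<C>"
  unfolding End_right_def
proof (intro CollectI conjI ballI allI)
  show "restrict (\<lambda>c. a \<star> c) \<C> \<in> \<C> \<rightarrow> \<C>" using assms CT_conv_left by simp
  fix c assume c: "c \<in> \<C>"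
  show "restrict (\<lambda>c. a \<star> c) \<C> (scal sm k c) = scal sm k (restrict (\<lambda>c. a \<star> c) \<C> c)" for k
    using c CT_scal by (simp add: conv_scal_right[OF sm_k_algebra])
  show "restrict (\<lambda>c. a \<star> c) \<C> (c \<star> b) = restrict (\<lambda>c. a \<star> c) \<C> c \<star> b" if "b \<in> \<B>" for b
    using that c CT_conv_right by (simp add: conv_assoc)
  fix d assume "d \<in> \<C>"
  then show "restrict (\<lambda>c. a \<star> c) \<C> (\<lambda>x y. c x y + d x y)
      = (\<lambda>x y. restrict (\<lambda>c. a \<star> c) \<C> c x y + restrict (\<lambda>c. a \<star> c) \<C> d x y)"
    using c CT_add by (simp add: conv_add_right)
qed simp

lemma End_right_eq_conv_left:
  assumes \<phi>: "\<phi> \<in> End_right sm Y e \<B> \<C>"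
  shows "\<exists>a\<in>\<A>. \<phi> = restrict (\<lambda>c. a \<star> c) \<C>"
proof
  have into: "\<phi> \<in> \<C> \<rightarrow> \<C>"
    and additive: "\<And>c d. c \<in> \<C> \<Longrightarrow> d \<in> \<C> \<Longrightarrow> \<phi> (\<lambda>x y. c x y + d x y) = (\<lambda>x y. \<phi> c x y + \<phi> d x y)"
    and B_linear: "\<And>b c. b \<in> \<B> \<Longrightarrow> c \<in> \<C> \<Longrightarrow> \<phi> (c \<star> b) = \<phi> c \<star> b"
    using \<phi> unfolding End_right_def by auto
  define a where "a = msum (\<lambda>l. \<phi> (M l) \<star> t l \<star> S l) Lam"
  have "\<phi> (M l) \<star> t l \<star> S l \<in> \<A>" if l: "l \<in> Lam" for l
  proof -
    have "\<phi> (M l) \<in> \<A>" using into M_in_CT[OF l] CT_iff by blast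
    then show ?thesis by (rule AT_conv[OF AT_conv[OF _ BT_subset_AT[OF t_in_BT[OF l]]] S_in_AT[OF l]])
  qed
  then show "a \<in> \<A>"
    unfolding a_def by (rule AT_msum[OF finite_Lam])
  show "\<phi> = restrict (\<lambda>c. a \<star> c) \<C>"
  proof
    fix c
    show "\<phi> c = restrict (\<lambda>c. a \<star> c) \<C> c"
    proof (cases "c \<in> \<C>")
      case True
      have "\<phi> c = \<phi> (msum (\<lambda>l. M l \<star> (t l \<star> S l \<star> c)) Lam)"
        using CT_decomp(1)[OF True] by (rule arg_cong)
      also have "\<dots> = msum (\<lambda>l. \<phi> (M l \<star> (t l \<star> S l \<star> c))) Lam"
        using msum_additive[of \<C> \<phi> Lam "\<lambda>l. M l \<star> (t l \<star> S l \<star> c)",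
            OF CT_zero CT_add additive finite_Lam CT_conv_right[OF M_in_CT CT_decomp(2)[OF True]]]
        by blast
      also have "\<dots> = msum (\<lambda>l. \<phi> (M l) \<star> (t l \<star> S l \<star> c)) Lam"
        using B_linear CT_decomp(2)[OF True] M_in_CT by (intro msum_cong) blast
      also have "\<dots> = a \<star> c"
        unfolding a_def conv_msum_left by (intro msum_cong) (simp only: conv_assoc)
      finally show ?thesis using True by simp
    next
      case False
      then show ?thesis using \<phi> unfolding End_right_def extensional_def by simp
    qed
  qed
qed

theorem End_right_CT: "bij_betw (\<lambda>a. restrict (\<lambda>c. a \<star> c) \<C>) \<A> (End_right sm Y e \<B> \<C>)"
proof (rule bij_betw_imageI)
  show "inj_on (\<lambda>a. restrict (\<lambda>c. a \<star> c) \<C>) \<A>"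
  proof (rule inj_onI)
    fix a a' assume a: "a \<in> \<A>" "a' \<in> \<A>" and eq: "restrict (\<lambda>c. a \<star> c) \<C> = restrict (\<lambda>c. a' \<star> c) \<C>"
    show "a = a'"
    proof (intro ext)
      fix y z
      show "a y z = a' y z"
      proof (cases "z \<in> Y")
        case True
        then obtain x where x: "x \<in> X\<^sub>\<omega>" "z = p (lab z) x"
          using p_image[OF lab_in_Lam[OF True]] by (force simp: Yl_iff)
        have "a \<star> M (lab z) = a' \<star> M (lab z)"
          using fun_cong[OF eq, of "M (lab z)"] M_in_CT[OF lab_in_Lam[OF True]] by simp
        then show ?thesis
          using conv_M_apply[OF lab_in_Lam[OF True] x(1)] x(2) by metis
      next
        case False
        then show ?thesis using AT_support a unfolding cols_in_def by metis
      qed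
    qed
  qed
  show "(\<lambda>a. restrict (\<lambda>c. a \<star> c) \<C>) ` \<A> = End_right sm Y e \<B> \<C>"
    using conv_left_in_End_right End_right_eq_conv_left by blast
qed

end

theorem theorem4:
  fixes G :: "('g, 'b) monoid_scheme"
    and actR :: "'g \<Rightarrow> 'r::ring_1 \<Rightarrow> 'r"
    and sm :: "'k::field \<Rightarrow> 'r \<Rightarrow> 'r"
    and Lam :: "'l set" and om :: 'l
    and Y :: "'y set" and lab :: "'y \<Rightarrow> 'l"
    and actY :: "'g \<Rightarrow> 'y \<Rightarrow> 'y"
    and p :: "'l \<Rightarrow> 'y \<Rightarrow> 'y"
    and e :: "'y \<Rightarrow> 'r"
    and T :: "'r set"
  assumes "standing_assumptions G actR sm Lam om Y lab actY p e"
    and "G_stable_subring G actR T"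
    and "cond_star om Y lab p e T"
  shows
    "bij_betw (\<lambda>b. restrict (\<lambda>c. conv Y e c b) (CT G actR sm Lam om Y lab actY p e T))
        (BT G actR sm Lam om Y lab actY p e T)
        (End_left sm Y e (AT G actR sm Lam om Y lab actY p e T) (CT G actR sm Lam om Y lab actY p e T))
   \<and> bij_betw (\<lambda>a. restrict (\<lambda>c. conv Y e a c) (CT G actR sm Lam om Y lab actY p e T))
        (AT G actR sm Lam om Y lab actY p e T)
        (End_right sm Y e (BT G actR sm Lam om Y lab actY p e T) (CT G actR sm Lam om Y lab actY p e T))
   \<and> BT G actR sm Lam om Y lab actY p e T =
       (\<lambda>a. conv Y e (conv Y e (one_l Y lab e om) a) (one_l Y lab e om)) ` AT G actR sm Lam om Y lab actY p e T"
proof -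
  interpret star_condition G actR sm Lam om Y lab actY p e T
    using assms(1,3) by (simp add: star_condition_def star_condition_axioms_def standing_def)
  show ?thesis
    using End_left_CT End_right_CT BT_eq_corner_AT by blast
qed

end
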